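(* Let $q\ge2$ be an integer and $m\ge0$ an integer. Then, in base $q$, $$a_{q^m}=q^m\left(2q^{\frac{q^m-1}{q-1}}-1\right).$$ In particular, for $q=2$, $a_{2^m}=2^m\left(2^{2^m}-1\right)$.
   Context: For an integer base $q\ge2$, $s_q(m)$ denotes the sum of the base-$q$ digits of $m$, and $a_k$ denotes the smallest positive multiple of $k$ with $s_q(a_k)=k$. *)

theory Defs
  imports Main
begin

fun digit_sum :: "nat \<Rightarrow> nat \<Rightarrow> nat" where
  "digit_sum q m = (if q < 2 \<or> m = 0 then 0 else m mod q + digit_sum q (m div q))"

declare digit_sum.simps [simp del]

definition a_seq :: "nat \<Rightarrow> nat \<Rightarrow> nat" where
  "a_seq q k = (LEAST n. n > 0 \<and> k dvd n \<and> digit_sum q n = k)"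

end

theory Submission
  imports Defs
begin

(* Write k = q^m and N = (q^m - 1) div (q - 1), so that k = (q - 1) N + 1.
   A multiple of q^m is q^m b, and appending zero digits does not change the digit sum,
   so a_{q^m} = q^m B where B is the least number with digit sum (q - 1) N + 1.
   A number below q^N has at most N digits, hence digit sum at most (q - 1) N, with
   equality only for q^N - 1 (all digits q - 1).  Consequently B = 2 q^N - 1: it has digit
   sum (q - 1) N + 1 (a leading 1 followed by N digits q - 1), and any b with that digit
   sum satisfies b >= q^N, and b div q^N = 1 forces b mod q^N = q^N - 1. *)

lemma digit_sum_step:
  assumes "q \<ge> 2"
  shows "digit_sum q n = n mod q + digit_sum q (n div q)"
  using assms by (cases "n = 0") (simp_all add: digit_sum.simps[of q n] digit_sum.simps[of q 0])

lemma digit_sum_zero [simp]: "digit_sum q 0 = 0"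
  by (simp add: digit_sum.simps)

lemma digit_sum_digit:
  assumes "q \<ge> 2" and "d < q"
  shows "digit_sum q d = d"
  using digit_sum_step[OF assms(1), of d] assms(2) by simp

lemma digit_sum_split:
  assumes q: "q \<ge> 2"
  shows "digit_sum q n = digit_sum q (n mod q ^ t) + digit_sum q (n div q ^ t)"
proof (induction t arbitrary: n)
  case 0
  then show ?case by simp
next
  case (Suc t)
  have low: "n mod q ^ Suc t = q * (n div q mod q ^ t) + n mod q"
    by (simp add: mod_mult2_eq)
  have low_mod: "(n mod q ^ Suc t) mod q = n mod q"
    and low_div: "(n mod q ^ Suc t) div q = n div q mod q ^ t"
    unfolding low using q by simp_all
  have "digit_sum q n = n mod q + digit_sum q (n div q)"
    using digit_sum_step[OF q] .
  also have "\<dots> = n mod q + digit_sum q (n div q mod q ^ t) + digit_sum q (n div q ^ Suc t)"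
    using Suc.IH[of "n div q"] by (simp add: div_mult2_eq)
  also have "n mod q + digit_sum q (n div q mod q ^ t) = digit_sum q (n mod q ^ Suc t)"
    using digit_sum_step[OF q, of "n mod q ^ Suc t"] low_mod low_div by simp
  finally show ?case .
qed

lemma digit_sum_shift:
  assumes "q \<ge> 2"
  shows "digit_sum q (q ^ m * b) = digit_sum q b"
  using digit_sum_split[OF assms, of "q ^ m * b" m] assms by simp

lemma digit_sum_below_pow:
  assumes q: "q \<ge> 2" and c: "c < q ^ t"
  shows "digit_sum q c \<le> (q - 1) * t \<and> (digit_sum q c = (q - 1) * t \<longrightarrow> c = q ^ t - 1)"
  using c
proof (induction t arbitrary: c)
  case 0
  then show ?case by simp
next
  case (Suc t)
  have last_digit: "c mod q \<le> q - 1"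
    using q by (simp add: less_Suc_eq_le[symmetric])
  have "c div q < q ^ t"
    using Suc.prems by (simp add: less_mult_imp_div_less mult.commute)
  note IH = Suc.IH[OF this]
  have step: "digit_sum q c = c mod q + digit_sum q (c div q)"
    using digit_sum_step[OF q] .
  have "c = q ^ Suc t - 1" if max: "digit_sum q c = (q - 1) * Suc t"
  proof -
    have "c mod q = q - 1" and "c div q = q ^ t - 1"
      using step last_digit IH max by auto
    then have "c = q * (q ^ t - 1) + (q - 1)"
      by (metis div_mult_mod_eq mult.commute)
    also have "\<dots> = q ^ Suc t - 1"
      using q by (simp add: diff_mult_distrib2)
    finally show ?thesis .
  qed
  moreover have "digit_sum q c \<le> (q - 1) * Suc t"
    using step last_digit IH by simp
  ultimately show ?case
    by blast
qed

lemma digit_sum_pow_minus_one: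
  assumes q: "q \<ge> 2"
  shows "digit_sum q (q ^ t - 1) = (q - 1) * t"
proof (induction t)
  case 0
  then show ?case by simp
next
  case (Suc t)
  have split: "q ^ Suc t - 1 = (q - 1) + q * (q ^ t - 1)"
    using q by (simp add: diff_mult_distrib2)
  have "(q ^ Suc t - 1) mod q = q - 1"
    unfolding split mod_mult_self2 using q by simp
  moreover have "(q ^ Suc t - 1) div q = q ^ t - 1"
    unfolding split using q div_mult_self2[of q "q - 1" "q ^ t - 1"] by simp
  ultimately show ?case
    using digit_sum_step[OF q, of "q ^ Suc t - 1"] Suc.IH by simp
qed

lemma digit_sum_two_pow_minus_one:
  assumes q: "q \<ge> 2"
  shows "digit_sum q (2 * q ^ t - 1) = (q - 1) * t + 1"
proof -
  have split: "2 * q ^ t - 1 = (q ^ t - 1) + q ^ t * 1"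
    using q by simp
  have "(2 * q ^ t - 1) mod q ^ t = q ^ t - 1"
    unfolding split mod_mult_self2 using q by simp
  moreover have "(2 * q ^ t - 1) div q ^ t = 1"
    unfolding split using q div_mult_self2[of "q ^ t" "q ^ t - 1" 1] by simp
  ultimately show ?thesis
    using digit_sum_split[OF q, of "2 * q ^ t - 1" t] digit_sum_pow_minus_one[OF q]
      digit_sum_digit[OF q, of 1] q by simp
qed

lemma two_pow_minus_one_minimal:
  assumes q: "q \<ge> 2" and b: "digit_sum q b = (q - 1) * t + 1"
  shows "2 * q ^ t - 1 \<le> b"
proof (rule ccontr)
  assume "\<not> 2 * q ^ t - 1 \<le> b"
  then have small: "b < 2 * q ^ t - 1" by simp
  have "\<not> b < q ^ t"
    using digit_sum_below_pow[OF q, of b t] b by auto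
  then have high: "b div q ^ t = 1"
    using small by (intro div_nat_eqI) simp_all
  then have "b mod q ^ t < q ^ t - 1"
    using small div_mult_mod_eq[of b "q ^ t"] by simp
  moreover have "digit_sum q (b mod q ^ t) = (q - 1) * t"
    using digit_sum_split[OF q, of b t] b high digit_sum_digit[OF q, of 1] q by simp
  moreover have "b mod q ^ t < q ^ t"
    using q by simp
  ultimately show False
    using digit_sum_below_pow[OF q] by fastforce
qed

text \<open>The multiples of \<open>q^m\<close> are the numbers \<open>q^m b\<close>, whose digit sum is that of \<open>b\<close>;
  so \<open>a_{q^m}\<close> is \<open>q^m\<close> times the least number with digit sum \<open>q^m\<close>
  (which is automatically positive).\<close>
lemma a_seq_pow_eq:
  assumes q: "q \<ge> 2" and B: "digit_sum q B = q ^ m"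
    and minimal: "\<And>b. digit_sum q b = q ^ m \<Longrightarrow> B \<le> b"
  shows "a_seq q (q ^ m) = q ^ m * B"
  unfolding a_seq_def
proof (rule Least_equality)
  have "B \<noteq> 0"
    using B by (metis digit_sum_zero power_not_zero q not_numeral_le_zero)
  then show "0 < q ^ m * B \<and> q ^ m dvd q ^ m * B \<and> digit_sum q (q ^ m * B) = q ^ m"
    using q B digit_sum_shift[OF q] by simp
next
  fix n
  assume n: "0 < n \<and> q ^ m dvd n \<and> digit_sum q n = q ^ m"
  then obtain b where "n = q ^ m * b" by blast
  with n show "q ^ m * B \<le> n"
    using minimal digit_sum_shift[OF q] by simp
qed

lemma pow_minus_one_dvd:
  fixes q m :: nat
  assumes "q \<ge> 1"
  shows "(q - 1) dvd (q ^ m - 1)"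
proof -
  have "int q - 1 dvd int q ^ m - 1"
    by (simp add: power_diff_1_eq)
  then show ?thesis
    using assms by (simp flip: int_dvd_int_iff)
qed

theorem mainTheorem15:
  fixes q m :: nat
  assumes "q \<ge> 2"
  shows "a_seq q (q ^ m) = q ^ m * (2 * q ^ ((q ^ m - 1) div (q - 1)) - 1)"
proof -
  define N where "N = (q ^ m - 1) div (q - 1)"
  have k: "q ^ m = (q - 1) * N + 1"
    using pow_minus_one_dvd[of q m] assms
    by (simp add: N_def Suc_le_eq)
  have "a_seq q (q ^ m) = q ^ m * (2 * q ^ N - 1)"
  proof (rule a_seq_pow_eq[OF assms])
    show "digit_sum q (2 * q ^ N - 1) = q ^ m"
      using digit_sum_two_pow_minus_one[OF assms] k by simp
    show "2 * q ^ N - 1 \<le> b" if "digit_sum q b = q ^ m" for b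
      using two_pow_minus_one_minimal[OF assms] that k by simp
  qed
  then show ?thesis
    by (simp add: N_def)
qed

end
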